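(* Let $\gamma>1$, $j\in\{0,1,2\}$, $J(x)=\int_1^x r^{-j/2}\,dr$, and let $v:\mathbb R\to\mathbb R$ be $C^1$. Suppose $s$ and $\tau_-$ are $C^1$ functions on $[1,\infty)$ with $\tau_-(1)=0$, satisfying for all $x\ge1$ $$s'(x)=1-\frac{\gamma+1}{4}v(\tau_-(x))\,x^{-j/2},\qquad s(x)-\tau_-(x)=x-1-\frac{\gamma+1}{2}v(\tau_-(x))J(x).$$ Then for all $x\ge1$ $$\frac{\gamma+1}{4}v(\tau_-(x))^2J(x)=\int_0^{\tau_-(x)}v(s)\,ds.$$ Consequently, if $v(\tau_-(x))>0$ for large $x$ and $\int_0^{\tau_-(x)}v(s)\,ds\to b>0$ as $x\to\infty$, then the velocity jump $[u]=x^{-j/2}v(\tau_-(x))$ satisfies $$[u]\sim\Big(\frac{4b}{(\gamma+1)J(x)}\Big)^{1/2}x^{-j/2}\sim\Big(\frac{4b}{\gamma+1}\Big)^{1/2}\begin{cases}x^{-1/2},&j=0,\\ \tfrac{1}{\sqrt2}x^{-3/4},&j=1,\\ x^{-1}(\log x)^{-1/2},&j=2.\end{cases}$$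
   Context: Setting: leading-order modulated simple wave $u=v(\tau)x^{-j/2}$ on forward characteristics $t-\tau=x-1-\frac{\gamma+1}{2}v(\tau)J(x)$ (wavelets labelled by $\tau$, the time at which they leave $x=1$), with $v$ the boundary data $u(1,\tau)$. A weak shock $t=s(x)$ moves into gas at rest; $\tau_-(x)$ is the label of the wavelet immediately behind the shock at position $x$, and the first relation is the weak-shock speed law $1/U\approx1-\frac{\gamma+1}{4}[u]$. *)

theory Defs
  imports "HOL-Analysis.Analysis" "HOL-Library.Landau_Symbols"
begin

definition Jfun :: "nat \<Rightarrow> real \<Rightarrow> real" where
  "Jfun j x = integral {1..x} (\<lambda>r. r powr (- (real j / 2)))"

end

theory Submission
  imports Defs "HOL-Real_Asymp.Real_Asymp"
begin

(* The shock path s and the label tau of the wavelet just behind it satisfy the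
   weak-shock speed law s' = 1 - c/4 v(tau) g and the characteristic relation
   s - tau = x - 1 - c/2 v(tau) J, where J' = g, c = gamma + 1.  Differentiating
   the characteristic relation and eliminating s' gives
       tau' = c/4 v(tau) g + c/2 v'(tau) tau' J,
   and this is exactly what makes  H = c/4 v(tau)^2 J - \<integral>_0^tau v  stationary.
   As H(1) = 0, the "equal-area" identity c/4 v(tau)^2 J = \<integral>_0^tau v follows. *)

(* Fundamental theorem of calculus for the running integral y \<mapsto> \<integral>_0^y v, at any real y
   (including negative y, as the wavelet label tau may be negative). *)
lemma running_integral_has_derivative:
  fixes v :: "real \<Rightarrow> real"
  assumes "continuous_on UNIV v"
  shows "((\<lambda>y. LBINT t=ereal 0..ereal y. v t) has_real_derivative v y) (at y)"
proof -
  define r where "r = \<bar>y\<bar> + 1"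
  have "((\<lambda>u. LBINT t=ereal 0..ereal u. v t) has_vector_derivative v y) (at y within {-r..r})"
    by (rule interval_integral_FTC2) (use assms r_def in \<open>auto intro: continuous_on_subset\<close>)
  then have "((\<lambda>u. LBINT t=ereal 0..ereal u. v t) has_vector_derivative v y) (at y within {-r<..<r})"
    by (rule has_vector_derivative_within_subset) auto
  then show ?thesis
    unfolding has_real_derivative_iff_has_vector_derivative
    by (subst (asm) has_vector_derivative_within_open) (auto simp: r_def)
qed

(* One-sided derivatives on [1,\<infinity>) are unique, since every point of the half line is a
   limit point of it; needed to compare two ways of differentiating s - tau. *)
lemma derivative_unique_on_half_line:
  fixes f :: "real \<Rightarrow> real"
  assumes "1 \<le> x"
    and "(f has_real_derivative a) (at x within {1..})"
    and "(f has_real_derivative b) (at x within {1..})"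
  shows "a = b"
proof -
  have "at x within {1..} \<noteq> bot"
    using assms(1) by (metis atLeast_subset_iff at_le at_within_Ici_at_right
        bot.extremum_unique trivial_limit_at_right_real)
  then show ?thesis using vector_derivative_unique_within assms(2,3)
    unfolding has_real_derivative_iff_has_vector_derivative by blast
qed

lemma label_derivative_relation:
  fixes c x :: real and v v' s s' tau tau' J g :: "real \<Rightarrow> real"
  assumes x: "1 \<le> x"
    and vd: "\<And>y. (v has_real_derivative v' y) (at y)"
    and sd: "\<And>x. 1 \<le> x \<Longrightarrow> (s has_real_derivative s' x) (at x within {1..})"
    and td: "\<And>x. 1 \<le> x \<Longrightarrow> (tau has_real_derivative tau' x) (at x within {1..})"
    and Jd: "\<And>x. 1 \<le> x \<Longrightarrow> (J has_real_derivative g x) (at x within {1..})"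
    and sp: "\<And>x. 1 \<le> x \<Longrightarrow> s' x = 1 - c/4 * v (tau x) * g x"
    and ch: "\<And>x. 1 \<le> x \<Longrightarrow> s x - tau x = x - 1 - c/2 * v (tau x) * J x"
  shows "tau' x = c/4 * v (tau x) * g x + c/2 * v' (tau x) * tau' x * J x"
proof -
  have char_deriv: "((\<lambda>x. x - 1 - c/2 * v (tau x) * J x) has_real_derivative
      1 - c/2 * (v' (tau x) * tau' x * J x + v (tau x) * g x)) (at x within {1..})"
    by (auto intro!: derivative_eq_intros DERIV_chain2[OF vd] td Jd x simp: algebra_simps)
  have "((\<lambda>x. s x - tau x) has_real_derivative
      1 - c/2 * (v' (tau x) * tau' x * J x + v (tau x) * g x)) (at x within {1..})"
    by (rule has_field_derivative_transform_within[OF char_deriv zero_less_one]) (use x ch in auto)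
  moreover have "((\<lambda>x. s x - tau x) has_real_derivative s' x - tau' x) (at x within {1..})"
    by (intro derivative_intros sd td x)
  ultimately have "s' x - tau' x = 1 - c/2 * (v' (tau x) * tau' x * J x + v (tau x) * g x)"
    using derivative_unique_on_half_line x by blast
  then show ?thesis using sp[OF x] by (simp add: algebra_simps)
qed

(* The equal-area identity: c/4 v(tau)^2 J - \<integral>_0^tau v has zero derivative on
   [1,\<infinity>) by the previous lemma and vanishes at x = 1. *)
lemma equal_area_identity:
  fixes c x :: real and v v' s s' tau tau' J g :: "real \<Rightarrow> real"
  assumes x: "1 \<le> x"
    and vd: "\<And>y. (v has_real_derivative v' y) (at y)"
    and sd: "\<And>x. 1 \<le> x \<Longrightarrow> (s has_real_derivative s' x) (at x within {1..})"
    and td: "\<And>x. 1 \<le> x \<Longrightarrow> (tau has_real_derivative tau' x) (at x within {1..})"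
    and Jd: "\<And>x. 1 \<le> x \<Longrightarrow> (J has_real_derivative g x) (at x within {1..})"
    and J1: "J 1 = 0" and tau1: "tau 1 = 0"
    and sp: "\<And>x. 1 \<le> x \<Longrightarrow> s' x = 1 - c/4 * v (tau x) * g x"
    and ch: "\<And>x. 1 \<le> x \<Longrightarrow> s x - tau x = x - 1 - c/2 * v (tau x) * J x"
  shows "c/4 * (v (tau x))\<^sup>2 * J x = (LBINT t=ereal 0..ereal (tau x). v t)"
proof -
  define V where "V y = (LBINT t=ereal 0..ereal y. v t)" for y
  have Vd: "(V has_real_derivative v y) (at y)" for y
    unfolding V_def[abs_def]
    by (rule running_integral_has_derivative)
       (use vd in \<open>meson DERIV_isCont continuous_at_imp_continuous_on\<close>)
  define H where "H y = c/4 * (v (tau y))\<^sup>2 * J y - V (tau y)" for y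
  have "(H has_real_derivative 0) (at y within {1..})" if y: "y \<in> {1..}" for y
  proof -
    have y1: "1 \<le> y" using y by simp
    have v_tau: "((\<lambda>x. v (tau x)) has_real_derivative v' (tau y) * tau' y) (at y within {1..})"
      by (rule DERIV_chain2[OF vd td[OF y1]])
    have V_tau: "((\<lambda>x. V (tau x)) has_real_derivative v (tau y) * tau' y) (at y within {1..})"
      by (rule DERIV_chain2[OF Vd td[OF y1]])
    have "(H has_real_derivative
        v (tau y) * (c/2 * v' (tau y) * tau' y * J y + c/4 * v (tau y) * g y - tau' y))
        (at y within {1..})"
      unfolding H_def[abs_def]
      by (auto intro!: derivative_eq_intros v_tau V_tau Jd[OF y1]
               simp: algebra_simps power2_eq_square)
    moreover have "c/2 * v' (tau y) * tau' y * J y + c/4 * v (tau y) * g y - tau' y = 0"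
      using label_derivative_relation[OF y1 vd sd td Jd sp ch] by simp
    ultimately show ?thesis by simp
  qed
  then obtain C where "\<And>y. y \<in> {1..} \<Longrightarrow> H y = C"
    using has_field_derivative_zero_constant[OF convex_real_interval(1)] by blast
  moreover have "H 1 = 0" by (simp add: H_def V_def J1 tau1)
  ultimately have "H x = 0" using x by force
  then show ?thesis by (simp add: H_def V_def)
qed

lemma Jfun_has_derivative:
  assumes "1 \<le> x"
  shows "(Jfun j has_real_derivative x powr (- (real j / 2))) (at x within {1..})"
proof -
  have "(Jfun j has_real_derivative x powr (- (real j / 2))) (at x within {1..x+1})"
    unfolding Jfun_def[abs_def]
    by (rule integral_has_real_derivative) (use assms in \<open>auto intro!: continuous_intros\<close>)
  moreover have "at x within {1..x+1} = at x within {1..}"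
    by (rule at_within_nhd[of _ "{..<x+1}"]) auto
  ultimately show ?thesis by simp
qed

lemma Jfun_explicit:
  assumes "1 \<le> x" "j \<in> {0,1,2::nat}"
  shows "Jfun j x = (if j = 0 then x - 1 else if j = 1 then 2 * sqrt x - 2 else ln x)"
proof -
  have FTC: "Jfun j x = f x - f 1"
    if "\<And>r. 1 \<le> r \<Longrightarrow> r \<le> x \<Longrightarrow>
          (f has_real_derivative r powr (- (real j / 2))) (at r within {1..x})" for f
    unfolding Jfun_def
    by (rule integral_unique, rule fundamental_theorem_of_calculus)
       (use assms that in \<open>auto simp: has_real_derivative_iff_has_vector_derivative[symmetric]\<close>)
  consider "j = 0" | "j = 1" | "j = 2" using assms by auto
  then show ?thesis
  proof cases
    case 1
    have "Jfun j x = x - 1"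
      using FTC[of "\<lambda>r. r"] 1 by (auto intro!: derivative_eq_intros)
    then show ?thesis using 1 by simp
  next
    case 2
    have "Jfun j x = 2 * sqrt x - 2 * sqrt 1"
    proof (rule FTC)
      fix r :: real assume r: "1 \<le> r" "r \<le> x"
      have "r powr (- (real j / 2)) = 2 * (inverse (sqrt r) / 2)"
        using 2 r by (simp add: powr_minus powr_half_sqrt)
      then show "((\<lambda>r. 2 * sqrt r) has_real_derivative r powr (- (real j / 2))) (at r within {1..x})"
        using r by (auto intro!: derivative_eq_intros)
    qed
    then show ?thesis using 2 by simp
  next
    case 3
    have "Jfun j x = ln x - ln 1"
    proof (rule FTC)
      fix r :: real assume r: "1 \<le> r" "r \<le> x"
      have "r powr (- (real j / 2)) = inverse r"
        using 3 r by (simp add: powr_minus)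
      then show "(ln has_real_derivative r powr (- (real j / 2))) (at r within {1..x})"
        using r by (auto intro!: derivative_eq_intros simp: field_simps)
    qed
    then show ?thesis using 3 by simp
  qed
qed

lemma Jfun_pos: "1 < x \<Longrightarrow> j \<in> {0,1,2::nat} \<Longrightarrow> Jfun j x > 0"
  using Jfun_explicit[of x j] by (auto simp: ln_gt_zero)

lemma Jfun_root_asymp:
  fixes K :: real
  assumes j: "j \<in> {0,1,2::nat}"
  shows "(\<lambda>x. sqrt (K / Jfun j x) * x powr (- (real j / 2))) \<sim>[at_top]
         (\<lambda>x. sqrt K * (if j = 0 then x powr (- 1 / 2)
                  else if j = 1 then 1 / sqrt 2 * x powr (- 3 / 4)
                  else x powr (- 1) * ln x powr (- 1 / 2)))"
proof -
  have large: "\<forall>\<^sub>F x in at_top. (x::real) > 1" by (rule eventually_gt_at_top)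
  consider "j = 0" | "j = 1" | "j = 2" using j by auto
  then show ?thesis
  proof cases
    case 1
    have "(\<lambda>x::real. 1 / sqrt (x - 1)) \<sim>[at_top] (\<lambda>x. x powr (-1/2))"
      by real_asymp
    then have "(\<lambda>x. sqrt K * (1 / sqrt (x - 1))) \<sim>[at_top] (\<lambda>x. sqrt K * x powr (-1/2))"
      by (rule asymp_equiv_mult[OF asymp_equiv_refl])
    moreover have "\<forall>\<^sub>F x in at_top.
        sqrt (K / Jfun j x) * x powr (- (real j / 2)) = sqrt K * (1 / sqrt (x - 1))"
      using large by eventually_elim (use 1 in \<open>auto simp: Jfun_explicit real_sqrt_divide\<close>)
    ultimately show ?thesis
      using 1 by (subst asymp_equiv_cong[OF _ always_eventually]) auto
  next
    case 2
    have "(\<lambda>x::real. x powr (-1/2) / sqrt (sqrt x - 1)) \<sim>[at_top] (\<lambda>x. x powr (-3/4))"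
      by real_asymp
    then have "(\<lambda>x. sqrt K * (1 / sqrt 2) * (x powr (-1/2) / sqrt (sqrt x - 1))) \<sim>[at_top]
        (\<lambda>x. sqrt K * (1 / sqrt 2) * x powr (-3/4))"
      by (rule asymp_equiv_mult[OF asymp_equiv_refl])
    moreover have "\<forall>\<^sub>F x in at_top. sqrt (K / Jfun j x) * x powr (- (real j / 2))
        = sqrt K * (1 / sqrt 2) * (x powr (-1/2) / sqrt (sqrt x - 1))"
      using large
    proof eventually_elim
      case (elim x)
      have "sqrt (2 * sqrt x - 2) = sqrt 2 * sqrt (sqrt x - 1)"
        by (simp add: real_sqrt_mult[symmetric] algebra_simps)
      then show ?case using 2 elim by (auto simp: Jfun_explicit real_sqrt_divide)
    qed
    ultimately show ?thesis
      using 2 by (subst asymp_equiv_cong[OF _ always_eventually]) (auto simp: mult.assoc)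
  next
    case 3
    have "(\<lambda>x::real. x powr (-1) / sqrt (ln x)) \<sim>[at_top] (\<lambda>x. x powr (-1) * ln x powr (-1/2))"
      by real_asymp
    then have "(\<lambda>x. sqrt K * (x powr (-1) / sqrt (ln x))) \<sim>[at_top]
        (\<lambda>x. sqrt K * (x powr (-1) * ln x powr (-1/2)))"
      by (rule asymp_equiv_mult[OF asymp_equiv_refl])
    moreover have "\<forall>\<^sub>F x in at_top.
        sqrt (K / Jfun j x) * x powr (- (real j / 2)) = sqrt K * (x powr (-1) / sqrt (ln x))"
      using large by eventually_elim (use 3 in \<open>auto simp: Jfun_explicit real_sqrt_divide\<close>)
    ultimately show ?thesis
      using 3 by (subst asymp_equiv_cong[OF _ always_eventually]) auto
  qed
qed

lemma root_asymp_from_equal_area: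
  fixes c b :: real and w J I :: "real \<Rightarrow> real"
  assumes c: "c > 0" and b: "b > 0" and lim: "(I \<longlongrightarrow> b) at_top"
    and energy: "\<forall>\<^sub>F x in at_top. w x > 0 \<and> J x > 0 \<and> c/4 * (w x)\<^sup>2 * J x = I x"
  shows "w \<sim>[at_top] (\<lambda>x. sqrt (4 * b / (c * J x)))"
proof (rule asymp_equivI')
  have "\<forall>\<^sub>F x in at_top. sqrt (I x / b) = w x / sqrt (4 * b / (c * J x))"
    using energy
  proof eventually_elim
    case (elim x)
    then have "I x / b = (w x)\<^sup>2 / (4 * b / (c * J x))"
      using c b by (simp add: field_simps)
    also have "\<dots> = (w x / sqrt (4 * b / (c * J x)))\<^sup>2"
      using elim c b by (simp add: power_divide)
    finally show ?case using elim c b by simp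
  qed
  moreover have "((\<lambda>x. sqrt (I x / b)) \<longlongrightarrow> sqrt (b / b)) at_top"
    using b by (intro tendsto_intros lim) auto
  ultimately show "((\<lambda>x. w x / sqrt (4 * b / (c * J x))) \<longlongrightarrow> 1) at_top"
    using b by (simp add: tendsto_cong)
qed

theorem mainTheorem5:
  fixes \<gamma> b :: real and j :: nat
    and v s tau s' tau' :: "real \<Rightarrow> real"
  assumes gamma: "\<gamma> > 1"
    and j: "j \<in> {0, 1, 2}"
    and v_C1: "v C1_differentiable_on UNIV"
    and s_deriv: "\<And>x. x \<ge> 1 \<Longrightarrow> (s has_real_derivative s' x) (at x within {1..})"
    and s'_cont: "continuous_on {1..} s'"
    and tau_deriv: "\<And>x. x \<ge> 1 \<Longrightarrow> (tau has_real_derivative tau' x) (at x within {1..})"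
    and tau'_cont: "continuous_on {1..} tau'"
    and tau1: "tau 1 = 0"
    and shock_speed: "\<And>x. x \<ge> 1 \<Longrightarrow>
        s' x = 1 - (\<gamma> + 1) / 4 * v (tau x) * x powr (- (real j / 2))"
    and characteristic: "\<And>x. x \<ge> 1 \<Longrightarrow>
        s x - tau x = x - 1 - (\<gamma> + 1) / 2 * v (tau x) * Jfun j x"
  shows "(\<forall>x\<ge>1. (\<gamma> + 1) / 4 * (v (tau x))\<^sup>2 * Jfun j x
                   = (LBINT t = ereal 0..ereal (tau x). v t))
       \<and> (((\<forall>\<^sub>F x in at_top. v (tau x) > 0) \<and> b > 0 \<and>
            ((\<lambda>x. LBINT t = ereal 0..ereal (tau x). v t) \<longlongrightarrow> b) at_top)
          \<longrightarrow>
            (\<lambda>x. x powr (- (real j / 2)) * v (tau x)) \<sim>[at_top]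
              (\<lambda>x. sqrt (4 * b / ((\<gamma> + 1) * Jfun j x)) * x powr (- (real j / 2)))
          \<and> (\<lambda>x. x powr (- (real j / 2)) * v (tau x)) \<sim>[at_top]
              (\<lambda>x. sqrt (4 * b / (\<gamma> + 1)) *
                 (if j = 0 then x powr (- 1 / 2)
                  else if j = 1 then 1 / sqrt 2 * x powr (- 3 / 4)
                  else x powr (- 1) * ln x powr (- 1 / 2))))"
proof -
  let ?jump = "\<lambda>x. x powr (- (real j / 2)) * v (tau x)"
  let ?root = "\<lambda>x. sqrt (4 * b / ((\<gamma> + 1) * Jfun j x)) * x powr (- (real j / 2))"
  let ?rate = "\<lambda>x. sqrt (4 * b / (\<gamma> + 1)) *
                 (if j = 0 then x powr (- 1 / 2)
                  else if j = 1 then 1 / sqrt 2 * x powr (- 3 / 4)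
                  else x powr (- 1) * ln x powr (- 1 / 2))"
  obtain v' where v_deriv: "\<And>y. (v has_real_derivative v' y) (at y)"
    using v_C1 unfolding C1_differentiable_on_def has_real_derivative_iff_has_vector_derivative
    by blast
  have equal_area: "(\<gamma> + 1) / 4 * (v (tau x))\<^sup>2 * Jfun j x
      = (LBINT t = ereal 0..ereal (tau x). v t)" if "x \<ge> 1" for x
    by (rule equal_area_identity[OF that v_deriv s_deriv tau_deriv Jfun_has_derivative _ tau1
          shock_speed characteristic]) (auto simp: Jfun_def)
  moreover have "?jump \<sim>[at_top] ?root \<and> ?jump \<sim>[at_top] ?rate"
    if pos: "\<forall>\<^sub>F x in at_top. v (tau x) > 0" and b: "b > 0"
      and lim: "((\<lambda>x. LBINT t = ereal 0..ereal (tau x). v t) \<longlongrightarrow> b) at_top"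
  proof -
    have "\<forall>\<^sub>F x in at_top. v (tau x) > 0 \<and> Jfun j x > 0 \<and>
        (\<gamma> + 1) / 4 * (v (tau x))\<^sup>2 * Jfun j x = (LBINT t = ereal 0..ereal (tau x). v t)"
      using pos eventually_gt_at_top[of 1]
      by eventually_elim (use equal_area Jfun_pos[OF _ j] in force)
    then have label_asymp:
        "(\<lambda>x. v (tau x)) \<sim>[at_top] (\<lambda>x. sqrt (4 * b / ((\<gamma> + 1) * Jfun j x)))"
      using root_asymp_from_equal_area[OF _ b lim] gamma by simp
    have "?jump \<sim>[at_top] ?root"
      using asymp_equiv_mult[OF asymp_equiv_refl label_asymp, of "\<lambda>x. x powr (- (real j / 2))"]
      by (simp add: mult.commute)
    moreover have "?root \<sim>[at_top] ?rate"
      using Jfun_root_asymp[OF j, of "4 * b / (\<gamma> + 1)"] by (simp add: field_simps)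
    ultimately show ?thesis using asymp_equiv_trans by blast
  qed
  ultimately show ?thesis by blast
qed

end
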